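(* Let $n \geq 2$ and let $\lambda = (\lambda_1, \ldots, \lambda_n)$ be a partition with $n$ parts. Then \[ A_\lambda(n) = \sum_{j=1}^n \binom{\lambda_1 - \lambda_2 + j - 1}{\lambda_1 - \lambda_2} R(\lambda, j). \]
   Context: Six-vertex model: on a grid with $r$ rows and $c$ columns there are $r$ horizontal lines and $c$ vertical lines meeting in $rc$ vertices. Each horizontal line consists of $c+1$ edges (the outermost ones are a left and a right boundary edge) and each vertical line of $r+1$ edges (the outermost ones are a top and a bottom boundary edge). A state assigns an orientation to every edge, agreeing with prescribed orientations on the boundary edges, such that at every vertex exactly two of the four adjacent edges point into the vertex and two point out. A partition $\lambda=(\lambda_1,\dots,\lambda_n)$ means integers $\lambda_1 \geq \cdots \geq \lambda_n \geq 0$. $A_\lambda(n)$ is the number of states on the grid with $n$ rows and $n + \lambda_1$ columns with boundary conditions: left boundary arrows point right, right boundary arrows point left, bottom boundary arrows point down, and, numbering columns $1, \ldots, n+\lambda_1$ from right to left, the top boundary arrow in column $i$ points up if $i \in \{\lambda_k + n + 1 - k : 1 \leq k \leq n\}$ and down otherwise. Number rows $1,\dots,n$ from top to bottom. $R(\lambda, j)$ is the number of states on the grid formed by the rightmost $n + \lambda_2 - 1$ columns (columns $1, \ldots, n+\lambda_2-1$) with boundary conditions: the top, bottom and right boundary arrows are as in the model for $A_\lambda(n)$ (top arrow of column $i$ up iff $i \in \{\lambda_k + n+1-k\}$, bottom down, right boundary pointing left), and on the left boundary of this subgrid the arrow in row $j$ points left while all other arrows point right. *)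

theory Defs
  imports Main
begin

text \<open>Six-vertex model on a grid with r rows (numbered 1..r from top to bottom) and
c columns (numbered 1..c from right to left).

Horizontal edges: in row i, the edge with position k (0 \<le> k \<le> c) lies between
column k and column k+1; position 0 is the right boundary edge, position c the left
boundary edge.  h i k = True means the edge points right, False means it points left.

Vertical edges: in column j, the edge with position k (0 \<le> k \<le> r) lies between
row k and row k+1; position 0 is the top boundary edge, position r the bottom boundary
edge.  v j k = True means the edge points up, False means it points down.

Outside the index range the functions are required to be False, so that states are
finite objects.  Boundary data: L i / R i (left / right boundary of row i, True = points
right), T j / B j (top / bottom boundary of column j, True = points up).\<close>

definition six_vertex_states ::
  "nat \<Rightarrow> nat \<Rightarrow> (nat \<Rightarrow> bool) \<Rightarrow> (nat \<Rightarrow> bool) \<Rightarrow> (nat \<Rightarrow> bool) \<Rightarrow> (nat \<Rightarrow> bool)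
   \<Rightarrow> ((nat \<Rightarrow> nat \<Rightarrow> bool) \<times> (nat \<Rightarrow> nat \<Rightarrow> bool)) set" where
  "six_vertex_states r c L R T B =
    {(h, v).
      (\<forall>i k. h i k \<longrightarrow> 1 \<le> i \<and> i \<le> r \<and> k \<le> c) \<and>
      (\<forall>j k. v j k \<longrightarrow> 1 \<le> j \<and> j \<le> c \<and> k \<le> r) \<and>
      (\<forall>i\<in>{1..r}. h i c = L i \<and> h i 0 = R i) \<and>
      (\<forall>j\<in>{1..c}. v j 0 = T j \<and> v j r = B j) \<and>
      (\<forall>i\<in>{1..r}. \<forall>j\<in>{1..c}.
         of_bool (\<not> v j (i - 1))   \<comment> \<open>top edge points down, into the vertex\<close>
       + of_bool (v j i)             \<comment> \<open>bottom edge points up, into the vertex\<close>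
       + of_bool (\<not> h i (j - 1))   \<comment> \<open>right edge points left, into the vertex\<close>
       + of_bool (h i j)             \<comment> \<open>left edge points right, into the vertex\<close>
       = (2::nat))}"

definition is_partition :: "nat \<Rightarrow> (nat \<Rightarrow> nat) \<Rightarrow> bool" where
  "is_partition n lam \<longleftrightarrow> (\<forall>k. 1 \<le> k \<and> k < n \<longrightarrow> lam (Suc k) \<le> lam k)"

definition top_up :: "nat \<Rightarrow> (nat \<Rightarrow> nat) \<Rightarrow> nat set" where
  "top_up n lam = {lam k + n + 1 - k | k. 1 \<le> k \<and> k \<le> n}"

definition A_count :: "(nat \<Rightarrow> nat) \<Rightarrow> nat \<Rightarrow> nat" where
  "A_count lam n = card (six_vertex_states n (n + lam 1)
      (\<lambda>_. True) (\<lambda>_. False) (\<lambda>i. i \<in> top_up n lam) (\<lambda>_. False))"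

definition R_count :: "nat \<Rightarrow> (nat \<Rightarrow> nat) \<Rightarrow> nat \<Rightarrow> nat" where
  "R_count n lam j = card (six_vertex_states n (n + lam 2 - 1)
      (\<lambda>i. i \<noteq> j) (\<lambda>_. False) (\<lambda>i. i \<in> top_up n lam) (\<lambda>_. False))"

end

theory Submission
  imports Defs
begin

(* Cut the grid along the vertical line between columns n + lam 2 - 1 and n + lam 2.  The left
   block has width w = lam 1 - lam 2 + 1, and in it only the leftmost top arrow points up, because
   lam k + n + 1 - k < n + lam 2 for k >= 2.  Arrow conservation then forces every row of vertical
   edges of the left block to carry at most one upward arrow, whose column weakly decreases from
   top to bottom until, in some row j, it leaves through the cut.  So the arrows on the cut point
   right except in row j, and the left states with exit row j are the weakly decreasing sequences
   w >= u 1 >= ... >= u (j - 1) >= 1, of which there are (lam 1 - lam 2 + j - 1 choose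
   lam 1 - lam 2).  Counting states as pairs of left and right states glued along the cut gives
   the formula. *)

lemma six_vertex_states_cong:
  assumes "\<And>i. 1 \<le> i \<Longrightarrow> i \<le> r \<Longrightarrow> L i = L' i"
    and "\<And>i. 1 \<le> i \<Longrightarrow> i \<le> r \<Longrightarrow> R i = R' i"
    and "\<And>j. 1 \<le> j \<Longrightarrow> j \<le> c \<Longrightarrow> T j = T' j"
    and "\<And>j. 1 \<le> j \<Longrightarrow> j \<le> c \<Longrightarrow> B j = B' j"
  shows "six_vertex_states r c L R T B = six_vertex_states r c L' R' T' B'"
  using assms unfolding six_vertex_states_def by auto

lemma finite_pred2_support:
  "finite A \<Longrightarrow> finite {h :: nat \<Rightarrow> nat \<Rightarrow> bool. \<forall>i k. h i k \<longrightarrow> (i, k) \<in> A}"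
proof -
  assume "finite A"
  have "{h :: nat \<Rightarrow> nat \<Rightarrow> bool. \<forall>i k. h i k \<longrightarrow> (i, k) \<in> A} \<subseteq> (\<lambda>S i k. (i, k) \<in> S) ` Pow A"
  proof
    fix h assume "h \<in> {h. \<forall>i k. h i k \<longrightarrow> (i, k) \<in> A}"
    then have "h = (\<lambda>i k. (i, k) \<in> {p \<in> A. h (fst p) (snd p)})" by auto
    then show "h \<in> (\<lambda>S i k. (i, k) \<in> S) ` Pow A" by blast
  qed
  then show ?thesis using \<open>finite A\<close> by (meson finite_Pow_iff finite_imageI finite_subset)
qed

lemma finite_six_vertex_states: "finite (six_vertex_states r c L R T B)"
proof (rule finite_subset)
  show "six_vertex_states r c L R T B \<subseteq>
      {h. \<forall>i k. h i k \<longrightarrow> (i, k) \<in> {0..r} \<times> {0..c}} \<times> {v. \<forall>j k. v j k \<longrightarrow> (j, k) \<in> {0..c} \<times> {0..r}}"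
    unfolding six_vertex_states_def by auto
qed (intro finite_cartesian_product finite_pred2_support finite_atLeastAtMost)

lemma six_vertex_statesD:
  assumes "(h, v) \<in> six_vertex_states r c L R T B"
  shows "\<And>i k. h i k \<Longrightarrow> 1 \<le> i \<and> i \<le> r \<and> k \<le> c"
    and "\<And>j k. v j k \<Longrightarrow> 1 \<le> j \<and> j \<le> c \<and> k \<le> r"
    and "\<And>i. 1 \<le> i \<Longrightarrow> i \<le> r \<Longrightarrow> h i c = L i"
    and "\<And>i. 1 \<le> i \<Longrightarrow> i \<le> r \<Longrightarrow> h i 0 = R i"
    and "\<And>j. 1 \<le> j \<Longrightarrow> j \<le> c \<Longrightarrow> v j 0 = T j"
    and "\<And>j. 1 \<le> j \<Longrightarrow> j \<le> c \<Longrightarrow> v j r = B j"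
    and "\<And>i j. 1 \<le> i \<Longrightarrow> i \<le> r \<Longrightarrow> 1 \<le> j \<Longrightarrow> j \<le> c \<Longrightarrow>
       of_bool (\<not> v j (i - 1)) + of_bool (v j i) + of_bool (\<not> h i (j - 1)) + of_bool (h i j) = (2::nat)"
  using assms unfolding six_vertex_states_def by auto

lemma six_vertex_statesI:
  assumes "\<And>i k. h i k \<Longrightarrow> 1 \<le> i \<and> i \<le> r \<and> k \<le> c"
    and "\<And>j k. v j k \<Longrightarrow> 1 \<le> j \<and> j \<le> c \<and> k \<le> r"
    and "\<And>i. 1 \<le> i \<Longrightarrow> i \<le> r \<Longrightarrow> h i c = L i \<and> h i 0 = R i"
    and "\<And>j. 1 \<le> j \<Longrightarrow> j \<le> c \<Longrightarrow> v j 0 = T j \<and> v j r = B j"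
    and "\<And>i j. 1 \<le> i \<Longrightarrow> i \<le> r \<Longrightarrow> 1 \<le> j \<Longrightarrow> j \<le> c \<Longrightarrow>
       of_bool (\<not> v j (i - 1)) + of_bool (v j i) + of_bool (\<not> h i (j - 1)) + of_bool (h i j) = (2::nat)"
  shows "(h, v) \<in> six_vertex_states r c L R T B"
  unfolding six_vertex_states_def using assms by simp

definition row_sets :: "nat \<Rightarrow> (nat \<Rightarrow> bool) set" where
  "row_sets r = {X. \<forall>i. X i \<longrightarrow> 1 \<le> i \<and> i \<le> r}"

lemma finite_row_sets: "finite (row_sets r)"
proof (rule finite_subset)
  show "row_sets r \<subseteq> (\<lambda>S i. i \<in> S) ` Pow {1..r}"
  proof
    fix X assume "X \<in> row_sets r"
    then have "X = (\<lambda>i. i \<in> {i \<in> {1..r}. X i})" unfolding row_sets_def by auto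
    then show "X \<in> (\<lambda>S i. i \<in> S) ` Pow {1..r}" by blast
  qed
qed simp

lemma six_vertex_states_right_edge:
  assumes "(h, v) \<in> six_vertex_states r c L R T B" and "R \<in> row_sets r"
  shows "h i 0 = R i"
  using six_vertex_statesD(1,4)[OF assms(1), of i] assms(2) unfolding row_sets_def
  by (cases "1 \<le> i \<and> i \<le> r") auto

lemma six_vertex_states_left_edge:
  assumes "(h, v) \<in> six_vertex_states r c L R T B" and "L \<in> row_sets r"
  shows "h i c = L i"
  using six_vertex_statesD(1,3)[OF assms(1), of i] assms(2) unfolding row_sets_def
  by (cases "1 \<le> i \<and> i \<le> r") auto

type_synonym state = "(nat \<Rightarrow> nat \<Rightarrow> bool) \<times> (nat \<Rightarrow> nat \<Rightarrow> bool)"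

definition left_columns :: "nat \<Rightarrow> state \<Rightarrow> state" where
  "left_columns c s = (\<lambda>i k. fst s i (k + c), \<lambda>j k. 0 < j \<and> snd s (j + c) k)"

definition right_columns :: "nat \<Rightarrow> state \<Rightarrow> state" where
  "right_columns c s = (\<lambda>i k. fst s i k \<and> k \<le> c, \<lambda>j k. snd s j k \<and> j \<le> c)"

definition glue_columns :: "nat \<Rightarrow> state \<Rightarrow> state \<Rightarrow> state" where
  "glue_columns c sl sr =
    (\<lambda>i k. if k \<le> c then fst sr i k else fst sl i (k - c),
     \<lambda>j k. if j \<le> c then snd sr j k else snd sl (j - c) k)"

lemma glue_left_right_columns: "glue_columns c (left_columns c s) (right_columns c s) = s"
  by (simp add: glue_columns_def left_columns_def right_columns_def prod_eq_iff fun_eq_iff)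

lemma left_columns_mem:
  assumes "(h, v) \<in> six_vertex_states r (c1 + c2) L R T B"
  shows "left_columns c1 (h, v) \<in>
    six_vertex_states r c2 L (\<lambda>i. 1 \<le> i \<and> i \<le> r \<and> h i c1) (\<lambda>j. T (j + c1)) (\<lambda>j. B (j + c1))"
  unfolding left_columns_def fst_conv snd_conv
proof (rule six_vertex_statesI)
  note S = six_vertex_statesD[OF assms]
  fix i j assume "1 \<le> i" "i \<le> r" "1 \<le> j" "j \<le> c2"
  moreover have "j - 1 + c1 = j + c1 - 1" using \<open>1 \<le> j\<close> by simp
  ultimately show "of_bool (\<not> (0 < j \<and> v (j + c1) (i - 1))) + of_bool (0 < j \<and> v (j + c1) i)
      + of_bool (\<not> h i (j - 1 + c1)) + of_bool (h i (j + c1)) = (2::nat)"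
    using S(7)[of i "j + c1"] by simp
next
  fix i assume "1 \<le> i" "i \<le> r"
  then show "h i (c2 + c1) = L i \<and> h i (0 + c1) = (1 \<le> i \<and> i \<le> r \<and> h i c1)"
    using six_vertex_statesD(3)[OF assms] by (simp add: add.commute)
next
  fix i k assume "h i (k + c1)"
  then show "1 \<le> i \<and> i \<le> r \<and> k \<le> c2" using six_vertex_statesD(1)[OF assms] by force
next
  fix j k assume "0 < j \<and> v (j + c1) k"
  then show "1 \<le> j \<and> j \<le> c2 \<and> k \<le> r" using six_vertex_statesD(2)[OF assms] by force
next
  fix j assume "1 \<le> j" "j \<le> c2"
  then show "(0 < j \<and> v (j + c1) 0) = T (j + c1) \<and> (0 < j \<and> v (j + c1) r) = B (j + c1)"
    using six_vertex_statesD(5,6)[OF assms] by simp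
qed

lemma right_columns_mem:
  assumes "(h, v) \<in> six_vertex_states r (c1 + c2) L R T B"
  shows "right_columns c1 (h, v) \<in> six_vertex_states r c1 (\<lambda>i. 1 \<le> i \<and> i \<le> r \<and> h i c1) R T B"
  unfolding right_columns_def fst_conv snd_conv
proof (rule six_vertex_statesI)
  fix i j assume "1 \<le> i" "i \<le> r" "1 \<le> j" "j \<le> c1"
  moreover have "j - 1 \<le> c1" using \<open>j \<le> c1\<close> by simp
  ultimately show "of_bool (\<not> (v j (i - 1) \<and> j \<le> c1)) + of_bool (v j i \<and> j \<le> c1)
      + of_bool (\<not> (h i (j - 1) \<and> j - 1 \<le> c1)) + of_bool (h i j \<and> j \<le> c1) = (2::nat)"
    using six_vertex_statesD(7)[OF assms, of i j] by simp
qed (use six_vertex_statesD[OF assms] in auto)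

context
  fixes c1 c2 r :: nat and X L R T B :: "nat \<Rightarrow> bool" and hl vl hr vr :: "nat \<Rightarrow> nat \<Rightarrow> bool"
  assumes X: "X \<in> row_sets r"
    and left: "(hl, vl) \<in> six_vertex_states r c2 L X (\<lambda>j. T (j + c1)) (\<lambda>j. B (j + c1))"
    and right: "(hr, vr) \<in> six_vertex_states r c1 X R T B"
begin

abbreviation glued :: state where
  "glued \<equiv> glue_columns c1 (hl, vl) (hr, vr)"

private lemma glued_simps:
  "fst glued i (k + c1) = hl i k"
  "k \<le> c1 \<Longrightarrow> fst glued i k = hr i k"
  "0 < j \<Longrightarrow> snd glued (j + c1) k = vl j k"
  "j \<le> c1 \<Longrightarrow> snd glued j k = vr j k"
  using six_vertex_states_right_edge[OF left X, of i] six_vertex_states_left_edge[OF right X, of i]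
  by (auto simp: glue_columns_def)

private lemma beyond_right_columns: "\<not> j \<le> c1 \<Longrightarrow> \<exists>j'. j = j' + c1 \<and> 0 < j'"
  by (intro exI[of _ "j - c1"]) simp

private lemma glued_vertex:
  assumes "1 \<le> i" "i \<le> r" "1 \<le> j" "j \<le> c1 + c2"
  shows "of_bool (\<not> snd glued j (i - 1)) + of_bool (snd glued j i)
    + of_bool (\<not> fst glued i (j - 1)) + of_bool (fst glued i j) = (2::nat)"
proof (cases "j \<le> c1")
  case True
  then show ?thesis using six_vertex_statesD(7)[OF right, of i j] assms by (simp add: glued_simps)
next
  case False
  then obtain j' where j': "j = j' + c1" "0 < j'" using beyond_right_columns by blast
  then have "fst glued i (j - 1) = hl i (j' - 1)" using glued_simps(1)[of i "j' - 1"] by simp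
  then show ?thesis
    using six_vertex_statesD(7)[OF left, of i j'] assms j' by (simp add: glued_simps)
qed

lemma glue_columns_mem: "glued \<in> six_vertex_states r (c1 + c2) L R T B"
proof (subst prod.collapse[symmetric], rule six_vertex_statesI)
  note Sl = six_vertex_statesD[OF left] and Sr = six_vertex_statesD[OF right]
  fix i k assume "fst glued i k"
  then show "1 \<le> i \<and> i \<le> r \<and> k \<le> c1 + c2"
  proof (cases "k \<le> c1")
    case False
    then obtain k' where "k = k' + c1" using beyond_right_columns by blast
    then show ?thesis using \<open>fst glued i k\<close> Sl(1)[of i k'] by (auto simp: glued_simps)
  qed (use Sr(1)[of i k] in \<open>auto simp: glued_simps\<close>)
next
  note Sl = six_vertex_statesD[OF left] and Sr = six_vertex_statesD[OF right]
  fix j k assume "snd glued j k"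
  then show "1 \<le> j \<and> j \<le> c1 + c2 \<and> k \<le> r"
  proof (cases "j \<le> c1")
    case False
    then obtain j' where "j = j' + c1" "0 < j'" using beyond_right_columns by blast
    then show ?thesis using \<open>snd glued j k\<close> Sl(2)[of j' k] by (auto simp: glued_simps)
  qed (use Sr(2)[of j k] in \<open>auto simp: glued_simps\<close>)
next
  fix i assume "1 \<le> i" "i \<le> r"
  then show "fst glued i (c1 + c2) = L i \<and> fst glued i 0 = R i"
    using glued_simps(1)[of i c2] glued_simps(2)[of 0 i] six_vertex_statesD(3)[OF left]
      six_vertex_statesD(4)[OF right] by (simp add: add.commute)
next
  fix j assume j: "1 \<le> j" "j \<le> c1 + c2"
  show "snd glued j 0 = T j \<and> snd glued j r = B j"
  proof (cases "j \<le> c1")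
    case True
    then show ?thesis using j six_vertex_statesD(5,6)[OF right] by (simp add: glued_simps)
  next
    case False
    then obtain j' where "j = j' + c1" "0 < j'" using beyond_right_columns by blast
    then show ?thesis using j six_vertex_statesD(5,6)[OF left, of j'] by (simp add: glued_simps)
  qed
qed (rule glued_vertex)

lemma left_columns_glue: "left_columns c1 glued = (hl, vl)"
proof -
  have "(0 < j \<and> snd glued (j + c1) k) = vl j k" for j k
    using six_vertex_statesD(2)[OF left, of 0 k] by (cases "j = 0") (auto simp: glued_simps)
  then show ?thesis by (simp add: left_columns_def fun_eq_iff glued_simps)
qed

lemma right_columns_glue: "right_columns c1 glued = (hr, vr)"
  using six_vertex_statesD(1,2)[OF right]
  by (auto simp: right_columns_def glue_columns_def fun_eq_iff)

end

definition split_columns :: "nat \<Rightarrow> state \<Rightarrow> state \<times> state" where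
  "split_columns c s = (left_columns c s, right_columns c s)"

lemma inj_split_columns: "inj (split_columns c)"
  by (rule inj_on_inverseI[where g = "\<lambda>(sl, sr). glue_columns c sl sr"])
     (simp add: split_columns_def glue_left_right_columns)

lemma split_columns_image:
  "split_columns c1 ` six_vertex_states r (c1 + c2) L R T B =
    (\<Union>X\<in>row_sets r. six_vertex_states r c2 L X (\<lambda>j. T (j + c1)) (\<lambda>j. B (j + c1))
                    \<times> six_vertex_states r c1 X R T B)"
proof (intro subset_antisym subsetI)
  fix p assume "p \<in> split_columns c1 ` six_vertex_states r (c1 + c2) L R T B"
  then obtain h v where hv: "(h, v) \<in> six_vertex_states r (c1 + c2) L R T B"
    and p: "p = split_columns c1 (h, v)" by auto
  define X where "X i = (1 \<le> i \<and> i \<le> r \<and> h i c1)" for i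
  have "X \<in> row_sets r" unfolding X_def row_sets_def by simp
  moreover have "p \<in> six_vertex_states r c2 L X (\<lambda>j. T (j + c1)) (\<lambda>j. B (j + c1))
      \<times> six_vertex_states r c1 X R T B"
    using left_columns_mem[OF hv] right_columns_mem[OF hv]
    unfolding p split_columns_def X_def by simp
  ultimately show "p \<in> (\<Union>X\<in>row_sets r. six_vertex_states r c2 L X (\<lambda>j. T (j + c1)) (\<lambda>j. B (j + c1))
      \<times> six_vertex_states r c1 X R T B)" by blast
next
  fix p assume "p \<in> (\<Union>X\<in>row_sets r. six_vertex_states r c2 L X (\<lambda>j. T (j + c1)) (\<lambda>j. B (j + c1))
      \<times> six_vertex_states r c1 X R T B)"
  then obtain X hl vl hr vr where X: "X \<in> row_sets r" and p: "p = ((hl, vl), (hr, vr))"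
    and left: "(hl, vl) \<in> six_vertex_states r c2 L X (\<lambda>j. T (j + c1)) (\<lambda>j. B (j + c1))"
    and right: "(hr, vr) \<in> six_vertex_states r c1 X R T B" by auto
  have "p = split_columns c1 (glue_columns c1 (hl, vl) (hr, vr))"
    unfolding p split_columns_def
    unfolding left_columns_glue[OF X left right] right_columns_glue[OF X left right] ..
  then show "p \<in> split_columns c1 ` six_vertex_states r (c1 + c2) L R T B"
    using glue_columns_mem[OF X left right] by blast
qed

lemma card_six_vertex_states_cut:
  "card (six_vertex_states r (c1 + c2) L R T B) =
    (\<Sum>X\<in>row_sets r. card (six_vertex_states r c2 L X (\<lambda>j. T (j + c1)) (\<lambda>j. B (j + c1)))
                     * card (six_vertex_states r c1 X R T B))"
proof -
  define left where "left X = six_vertex_states r c2 L X (\<lambda>j. T (j + c1)) (\<lambda>j. B (j + c1))" for X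
  define right where "right X = six_vertex_states r c1 X R T B" for X
  have disjoint: "left X \<inter> left Y = {}" if "X \<in> row_sets r" "Y \<in> row_sets r" "X \<noteq> Y" for X Y
  proof (rule ccontr)
    assume "left X \<inter> left Y \<noteq> {}"
    then obtain hl vl where "(hl, vl) \<in> left X" "(hl, vl) \<in> left Y" by auto
    then have "X i = hl i 0" "Y i = hl i 0" for i
      using six_vertex_states_right_edge that(1,2) unfolding left_def by blast+
    then have "X = Y" by blast
    with that(3) show False ..
  qed
  have "card (six_vertex_states r (c1 + c2) L R T B) =
      card (split_columns c1 ` six_vertex_states r (c1 + c2) L R T B)"
    by (rule card_image[symmetric]) (rule inj_on_subset[OF inj_split_columns], simp)
  also have "\<dots> = card (\<Union>X\<in>row_sets r. left X \<times> right X)"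
    unfolding split_columns_image left_def right_def ..
  also have "\<dots> = (\<Sum>X\<in>row_sets r. card (left X \<times> right X))"
  proof (rule card_UN_disjoint[OF finite_row_sets])
    show "\<forall>X\<in>row_sets r. finite (left X \<times> right X)"
      by (simp add: left_def right_def finite_six_vertex_states)
    show "\<forall>X\<in>row_sets r. \<forall>Y\<in>row_sets r. X \<noteq> Y \<longrightarrow>
        (left X \<times> right X) \<inter> (left Y \<times> right Y) = {}"
      using disjoint by blast
  qed
  finally show ?thesis by (simp add: card_cartesian_product left_def right_def)
qed

lemma row_of_single_up_arrow:
  fixes top bot hor :: "nat \<Rightarrow> bool"
  assumes vertex: "\<And>t. 1 \<le> t \<Longrightarrow> t \<le> w \<Longrightarrow>
      of_bool (\<not> top t) + of_bool (bot t) + of_bool (\<not> hor (t - 1)) + of_bool (hor t) = (2::nat)"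
    and "hor w" and "a \<le> w" and top: "\<And>t. 1 \<le> t \<Longrightarrow> t \<le> w \<Longrightarrow> top t = (t = a)"
  shows "\<exists>b \<le> a. (\<forall>t. 1 \<le> t \<longrightarrow> t \<le> w \<longrightarrow> bot t = (t = b)) \<and> (\<forall>k \<le> w. (\<not> hor k) = (b \<le> k \<and> k < a))"
proof -
  have "\<exists>b \<le> a. (\<forall>t. m < t \<longrightarrow> t \<le> w \<longrightarrow> bot t = (t = b)) \<and>
      (\<forall>k. m \<le> k \<longrightarrow> k \<le> w \<longrightarrow> (\<not> hor k) = (b \<le> k \<and> k < a))" if "m \<le> w" for m
    using that
  proof (induction m rule: inc_induct)
    case base
    show ?case using \<open>hor w\<close> \<open>a \<le> w\<close> by (intro exI[of _ 0]) auto
  next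
    case (step m)
    then obtain b where b: "b \<le> a" "\<forall>t. Suc m < t \<longrightarrow> t \<le> w \<longrightarrow> bot t = (t = b)"
      "\<forall>k. Suc m \<le> k \<longrightarrow> k \<le> w \<longrightarrow> (\<not> hor k) = (b \<le> k \<and> k < a)" by blast
    have V: "of_bool (\<not> top (Suc m)) + of_bool (bot (Suc m))
        + of_bool (\<not> hor m) + of_bool (hor (Suc m)) = (2::nat)"
      using vertex[of "Suc m"] step.hyps by simp
    have T: "top (Suc m) = (Suc m = a)" using top step.hyps by simp
    have H: "(\<not> hor (Suc m)) = (b \<le> Suc m \<and> Suc m < a)" using b(3) step.hyps by simp
    define b' where "b' = (if Suc m < b then b else if bot (Suc m) then Suc m else 0)"
    have "b' \<le> a" using V T H b(1) unfolding b'_def by (auto split: if_splits)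
    moreover have "bot t = (t = b')" if "m < t" "t \<le> w" for t
    proof (cases "t = Suc m")
      case True
      then show ?thesis using V T H b(1) unfolding b'_def by (auto split: if_splits)
    next
      case False
      then show ?thesis using b(2) that unfolding b'_def by auto
    qed
    moreover have "(\<not> hor k) = (b' \<le> k \<and> k < a)" if "m \<le> k" "k \<le> w" for k
    proof (cases "k = m")
      case True
      then show ?thesis using V T H b(1) unfolding b'_def by (auto split: if_splits)
    next
      case False
      then show ?thesis using b(1,3) that unfolding b'_def by auto
    qed
    ultimately show ?case by blast
  qed
  from this[of 0] show ?thesis by (simp add: Suc_le_eq)
qed

text \<open>\<open>u i\<close> is the column of the upward arrow on the vertical edges between rows \<open>i\<close> and \<open>i + 1\<close>,
  or \<open>0\<close> if there is none; \<open>u 0 = w\<close> is the arrow entering at the top.\<close>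

definition descent_paths :: "nat \<Rightarrow> nat \<Rightarrow> (nat \<Rightarrow> bool) \<Rightarrow> (nat \<Rightarrow> nat) set" where
  "descent_paths r w X = {u. u 0 = w \<and> (\<forall>i. u i \<le> w) \<and> (\<forall>i. r \<le> i \<longrightarrow> u i = 0) \<and>
     (\<forall>i. 1 \<le> i \<longrightarrow> i \<le> r \<longrightarrow> u i \<le> u (i - 1) \<and> X i = (\<not> (u i = 0 \<and> 0 < u (i - 1))))}"

definition path_state :: "nat \<Rightarrow> nat \<Rightarrow> (nat \<Rightarrow> nat) \<Rightarrow> state" where
  "path_state r w u =
    (\<lambda>i k. 1 \<le> i \<and> i \<le> r \<and> k \<le> w \<and> \<not> (u i \<le> k \<and> k < u (i - 1)),
     \<lambda>j k. 1 \<le> j \<and> j \<le> w \<and> k \<le> r \<and> j = u k)"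

lemma path_vertex_balance:
  fixes a b j :: nat
  assumes "b \<le> a" "1 \<le> j"
  shows "of_bool (j \<noteq> a) + of_bool (j = b) + of_bool (b \<le> j - 1 \<and> j - 1 < a)
    + of_bool (\<not> (b \<le> j \<and> j < a)) = (2::nat)"
proof -
  consider "j < b" | "j = b" "b = a" | "j = b" "b < a" | "b < j" "j < a" | "j = a" "b < a" | "a < j"
    using assms by linarith
  then show ?thesis using assms by cases auto
qed

lemma path_state_mem:
  assumes "u \<in> descent_paths r w X"
  shows "path_state r w u \<in> six_vertex_states r w (\<lambda>_. True) X (\<lambda>j. j = w) (\<lambda>_. False)"
proof -
  have u0: "u 0 = w" and le_w: "\<And>i. u i \<le> w" and ur: "u r = 0"
    and mono: "\<And>i. 1 \<le> i \<Longrightarrow> i \<le> r \<Longrightarrow> u i \<le> u (i - 1)"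
    and X: "\<And>i. 1 \<le> i \<Longrightarrow> i \<le> r \<Longrightarrow> X i = (\<not> (u i = 0 \<and> 0 < u (i - 1)))"
    using assms unfolding descent_paths_def by auto
  show ?thesis
  proof (subst prod.collapse[symmetric], rule six_vertex_statesI)
    fix i j assume ij: "1 \<le> i" "i \<le> r" "1 \<le> j" "j \<le> w"
    then have "snd (path_state r w u) j (i - 1) = (j = u (i - 1))"
      "snd (path_state r w u) j i = (j = u i)"
      "fst (path_state r w u) i (j - 1) = (\<not> (u i \<le> j - 1 \<and> j - 1 < u (i - 1)))"
      "fst (path_state r w u) i j = (\<not> (u i \<le> j \<and> j < u (i - 1)))"
      by (auto simp: path_state_def)
    then show "of_bool (\<not> snd (path_state r w u) j (i - 1)) + of_bool (snd (path_state r w u) j i)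
        + of_bool (\<not> fst (path_state r w u) i (j - 1)) + of_bool (fst (path_state r w u) i j) = (2::nat)"
      using path_vertex_balance[OF mono[OF ij(1,2)] ij(3)] by simp
  next
    fix i assume "1 \<le> i" "i \<le> r"
    then show "fst (path_state r w u) i w = True \<and> fst (path_state r w u) i 0 = X i"
      using le_w[of "i - 1"] X by (auto simp: path_state_def)
  next
    fix j assume "1 \<le> j" "j \<le> w"
    then show "snd (path_state r w u) j 0 = (j = w) \<and> snd (path_state r w u) j r = False"
      using u0 ur by (auto simp: path_state_def)
  qed (auto simp: path_state_def)
qed

definition up_column :: "nat \<Rightarrow> (nat \<Rightarrow> nat \<Rightarrow> bool) \<Rightarrow> nat \<Rightarrow> nat" where
  "up_column w v i = Max (insert 0 {t \<in> {1..w}. v t i})"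

lemma up_column_le: "up_column w v i \<le> w"
  unfolding up_column_def by (subst Max_le_iff) auto

lemma up_column_eq:
  assumes "\<And>t. 1 \<le> t \<Longrightarrow> t \<le> w \<Longrightarrow> v t i = (t = b)" "b \<le> w"
  shows "up_column w v i = b"
proof -
  have "{t \<in> {1..w}. v t i} = (if b = 0 then {} else {b})"
    using assms by (force split: if_splits)
  then show ?thesis unfolding up_column_def by simp
qed

lemma single_arrow_state_rows:
  assumes hv: "(h, v) \<in> six_vertex_states r w (\<lambda>_. True) X (\<lambda>j. j = w) (\<lambda>_. False)" and "i \<le> r"
  shows "\<forall>t. 1 \<le> t \<longrightarrow> t \<le> w \<longrightarrow> v t i = (t = up_column w v i)"
    and "1 \<le> i \<Longrightarrow> up_column w v i \<le> up_column w v (i - 1)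
      \<and> (\<forall>k \<le> w. (\<not> h i k) = (up_column w v i \<le> k \<and> k < up_column w v (i - 1)))"
proof -
  note S = six_vertex_statesD[OF hv]
  have "(\<forall>t. 1 \<le> t \<longrightarrow> t \<le> w \<longrightarrow> v t i = (t = up_column w v i)) \<and> (1 \<le> i \<longrightarrow>
      up_column w v i \<le> up_column w v (i - 1)
      \<and> (\<forall>k \<le> w. (\<not> h i k) = (up_column w v i \<le> k \<and> k < up_column w v (i - 1))))"
    using \<open>i \<le> r\<close>
  proof (induction i)
    case 0
    have "up_column w v 0 = w" by (rule up_column_eq) (use S(5) in auto)
    then show ?case using S(5) by auto
  next
    case (Suc i)
    then have above: "\<And>t. 1 \<le> t \<Longrightarrow> t \<le> w \<Longrightarrow> v t i = (t = up_column w v i)" by simp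
    have "of_bool (\<not> v t i) + of_bool (v t (Suc i)) + of_bool (\<not> h (Suc i) (t - 1))
        + of_bool (h (Suc i) t) = (2::nat)" if "1 \<le> t" "t \<le> w" for t
      using S(7)[OF _ \<open>Suc i \<le> r\<close> that] by simp
    moreover have "h (Suc i) w" using S(3)[OF _ \<open>Suc i \<le> r\<close>] by simp
    ultimately obtain b where b: "b \<le> up_column w v i"
      "\<forall>t. 1 \<le> t \<longrightarrow> t \<le> w \<longrightarrow> v t (Suc i) = (t = b)"
      "\<forall>k \<le> w. (\<not> h (Suc i) k) = (b \<le> k \<and> k < up_column w v i)"
      using row_of_single_up_arrow[of w "\<lambda>t. v t i" "\<lambda>t. v t (Suc i)" "h (Suc i)",
          OF _ _ up_column_le above]
      by blast
    moreover have "up_column w v (Suc i) = b"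
      by (rule up_column_eq) (use b up_column_le[of w v i] in auto)
    ultimately show ?case by simp
  qed
  then show "\<forall>t. 1 \<le> t \<longrightarrow> t \<le> w \<longrightarrow> v t i = (t = up_column w v i)"
    and "1 \<le> i \<Longrightarrow> up_column w v i \<le> up_column w v (i - 1)
      \<and> (\<forall>k \<le> w. (\<not> h i k) = (up_column w v i \<le> k \<and> k < up_column w v (i - 1)))"
    by blast+
qed

lemma six_vertex_states_single_arrow_path:
  assumes hv: "(h, v) \<in> six_vertex_states r w (\<lambda>_. True) X (\<lambda>j. j = w) (\<lambda>_. False)"
  shows "(h, v) \<in> path_state r w ` descent_paths r w X"
proof -
  note S = six_vertex_statesD[OF hv] and rows = single_arrow_state_rows[OF hv]
  define u where "u = up_column w v"
  have u0: "u 0 = w" unfolding u_def by (rule up_column_eq) (use S(5) in auto)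
  have ur: "u i = 0" if "r \<le> i" for i
  proof -
    have "\<not> v t i" if "1 \<le> t" "t \<le> w" for t
      using S(2)[of t i] S(6)[OF that] \<open>r \<le> i\<close> by (cases "i = r") auto
    then show ?thesis unfolding u_def by (intro up_column_eq) auto
  qed
  have mono: "u i \<le> u (i - 1)"
    and horizontal: "\<And>k. k \<le> w \<Longrightarrow> (\<not> h i k) = (u i \<le> k \<and> k < u (i - 1))"
    if "1 \<le> i" "i \<le> r" for i
    using rows(2)[OF that(2,1)] unfolding u_def by auto
  have "X i = (\<not> (u i = 0 \<and> 0 < u (i - 1)))" if "1 \<le> i" "i \<le> r" for i
    using S(4)[OF that] horizontal[OF that, of 0] by auto
  then have "u \<in> descent_paths r w X"
    unfolding descent_paths_def using u0 up_column_le ur mono by (simp add: u_def)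
  moreover have "h = fst (path_state r w u)"
  proof (intro ext)
    fix i k
    show "h i k = fst (path_state r w u) i k"
      using S(1)[of i k] horizontal[of i k] unfolding path_state_def by auto
  qed
  moreover have "v = snd (path_state r w u)"
  proof (intro ext)
    fix j k
    show "v j k = snd (path_state r w u) j k"
      using S(2)[of j k] rows(1)[of k] unfolding path_state_def u_def by auto
  qed
  ultimately show ?thesis by (metis image_eqI prod.collapse)
qed

lemma inj_on_path_state: "inj_on (path_state r w) (descent_paths r w X)"
proof
  fix u u' assume u: "u \<in> descent_paths r w X" and u': "u' \<in> descent_paths r w X"
    and eq: "path_state r w u = path_state r w u'"
  have V: "snd (path_state r w u) j k = snd (path_state r w u') j k" for j k
    using eq by simp
  show "u = u'"
  proof
    fix k
    have "u k \<le> w" "u' k \<le> w" "r \<le> k \<Longrightarrow> u k = 0 \<and> u' k = 0"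
      using u u' unfolding descent_paths_def by auto
    then show "u k = u' k"
      using V[of "u k" k] V[of "u' k" k] unfolding path_state_def by (cases "r \<le> k") auto
  qed
qed

lemma card_single_arrow_states:
  "card (six_vertex_states r w (\<lambda>_. True) X (\<lambda>j. j = w) (\<lambda>_. False)) = card (descent_paths r w X)"
proof -
  have "six_vertex_states r w (\<lambda>_. True) X (\<lambda>j. j = w) (\<lambda>_. False) =
      path_state r w ` descent_paths r w X"
    using six_vertex_states_single_arrow_path path_state_mem
    by (intro subset_antisym subsetI image_subsetI) auto
  then show ?thesis using card_image[OF inj_on_path_state] by simp
qed

definition decreasing_seqs :: "nat \<Rightarrow> nat \<Rightarrow> (nat \<Rightarrow> nat) set" where
  "decreasing_seqs L M = {u. u 0 = M \<and> (\<forall>i. 1 \<le> i \<and> i \<le> L \<longrightarrow> 1 \<le> u i \<and> u i \<le> u (i - 1))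
     \<and> (\<forall>i. L < i \<longrightarrow> u i = 0)}"

definition seq_cons :: "nat \<Rightarrow> (nat \<Rightarrow> nat) \<Rightarrow> nat \<Rightarrow> nat" where
  "seq_cons M u i = (if i = 0 then M else u (i - 1))"

lemma decreasing_seqs_le: "u \<in> decreasing_seqs L M \<Longrightarrow> u i \<le> M"
proof (induction i)
  case (Suc i)
  then show ?case unfolding decreasing_seqs_def by (cases "Suc i \<le> L") fastforce+
qed (simp add: decreasing_seqs_def)

lemma finite_decreasing_seqs: "finite (decreasing_seqs L M)"
proof (rule finite_subset)
  show "decreasing_seqs L M \<subseteq> {f. \<forall>x. (x \<in> {0..L} \<longrightarrow> f x \<in> {0..M}) \<and> (x \<notin> {0..L} \<longrightarrow> f x = 0)}"
    using decreasing_seqs_le by (auto simp: decreasing_seqs_def)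
qed (rule finite_set_of_finite_funs; simp)

lemma decreasing_seqs_Suc_Suc:
  "decreasing_seqs (Suc L) (Suc m) =
    seq_cons (Suc m) ` decreasing_seqs L (Suc m) \<union> (\<lambda>u. u(0 := Suc m)) ` decreasing_seqs (Suc L) m"
proof (intro subset_antisym subsetI)
  fix u assume u: "u \<in> decreasing_seqs (Suc L) (Suc m)"
  show "u \<in> seq_cons (Suc m) ` decreasing_seqs L (Suc m)
      \<union> (\<lambda>u. u(0 := Suc m)) ` decreasing_seqs (Suc L) m"
  proof (cases "u 1 = Suc m")
    case True
    then have "u = seq_cons (Suc m) (\<lambda>i. u (Suc i))" "(\<lambda>i. u (Suc i)) \<in> decreasing_seqs L (Suc m)"
      using u by (auto simp: decreasing_seqs_def seq_cons_def fun_eq_iff)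
    then show ?thesis by blast
  next
    case False
    then have "u = (u(0 := m))(0 := Suc m)" "u(0 := m) \<in> decreasing_seqs (Suc L) m"
      using u unfolding decreasing_seqs_def by (auto simp: le_Suc_eq)
    then show ?thesis by blast
  qed
next
  fix u assume "u \<in> seq_cons (Suc m) ` decreasing_seqs L (Suc m)
    \<union> (\<lambda>u. u(0 := Suc m)) ` decreasing_seqs (Suc L) m"
  then consider x where "x \<in> decreasing_seqs L (Suc m)" "u = seq_cons (Suc m) x"
    | x where "x \<in> decreasing_seqs (Suc L) m" "u = x(0 := Suc m)"
    by blast
  then show "u \<in> decreasing_seqs (Suc L) (Suc m)"
  proof cases
    case 1
    have "1 \<le> u i \<and> u i \<le> u (i - 1)" if "1 \<le> i" "i \<le> Suc L" for i
    proof (cases "i = 1")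
      case False
      then show ?thesis using 1 that unfolding decreasing_seqs_def seq_cons_def
        by (auto dest!: spec[of _ "i - 1"])
    qed (use 1 in \<open>simp add: decreasing_seqs_def seq_cons_def\<close>)
    moreover have "u 0 = Suc m" "\<forall>i. Suc L < i \<longrightarrow> u i = 0"
      using 1 by (auto simp: seq_cons_def decreasing_seqs_def)
    ultimately show ?thesis unfolding decreasing_seqs_def by blast
  next
    case 2
    then show ?thesis unfolding decreasing_seqs_def by (auto simp: le_Suc_eq)
  qed
qed

lemma card_decreasing_seqs_Suc_Suc:
  "card (decreasing_seqs (Suc L) (Suc m)) =
    card (decreasing_seqs L (Suc m)) + card (decreasing_seqs (Suc L) m)"
proof -
  let ?A = "seq_cons (Suc m) ` decreasing_seqs L (Suc m)"
  let ?B = "(\<lambda>u. u(0 := Suc m)) ` decreasing_seqs (Suc L) m"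
  have "inj (seq_cons (Suc m))"
    by (rule inj_on_inverseI[where g = "\<lambda>u i. u (Suc i)"]) (simp add: seq_cons_def)
  then have A: "card ?A = card (decreasing_seqs L (Suc m))"
    by (simp add: card_image inj_on_subset)
  have "inj_on (\<lambda>u. u(0 := Suc m)) (decreasing_seqs (Suc L) m)"
  proof (rule inj_onI)
    fix u u' assume "u \<in> decreasing_seqs (Suc L) m" "u' \<in> decreasing_seqs (Suc L) m"
      and "u(0 := Suc m) = u'(0 := Suc m)"
    moreover have "u = (u(0 := Suc m))(0 := m)" "u' = (u'(0 := Suc m))(0 := m)"
      using \<open>u \<in> _\<close> \<open>u' \<in> _\<close> by (auto simp: decreasing_seqs_def)
    ultimately show "u = u'" by metis
  qed
  then have B: "card ?B = card (decreasing_seqs (Suc L) m)"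
    by (rule card_image)
  have "?A \<inter> ?B = {}"
  proof (intro equals0I)
    fix u assume "u \<in> ?A \<inter> ?B"
    then obtain x y where "x \<in> decreasing_seqs L (Suc m)" "y \<in> decreasing_seqs (Suc L) m"
      and "seq_cons (Suc m) x = y(0 := Suc m)" by blast
    then have "seq_cons (Suc m) x 1 = (y(0 := Suc m)) 1" "x \<in> decreasing_seqs L (Suc m)"
      "y \<in> decreasing_seqs (Suc L) m" by simp_all
    then show False
      using decreasing_seqs_le[of y "Suc L" m 1] by (simp add: seq_cons_def decreasing_seqs_def)
  qed
  then have "card (?A \<union> ?B) = card ?A + card ?B"
    by (intro card_Un_disjoint finite_imageI finite_decreasing_seqs)
  then show ?thesis unfolding decreasing_seqs_Suc_Suc A B .
qed

lemma card_decreasing_seqs: "card (decreasing_seqs L (Suc m)) = (m + L) choose L"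
proof (induction L arbitrary: m)
  case 0
  have "decreasing_seqs 0 (Suc m) = {\<lambda>i. if i = 0 then Suc m else 0}"
    by (auto simp: decreasing_seqs_def)
  then show ?case by simp
next
  case (Suc L)
  note IH = Suc.IH
  show ?case
  proof (induction m)
    case 0
    have "decreasing_seqs (Suc L) 0 = {}"
      by (auto simp: decreasing_seqs_def dest: spec[of _ 1])
    then show ?case using IH[of 0] by (simp add: card_decreasing_seqs_Suc_Suc)
  next
    case (Suc m)
    then show ?case using IH[of "Suc m"] Suc.IH by (simp add: card_decreasing_seqs_Suc_Suc)
  qed
qed

definition all_right_except :: "nat \<Rightarrow> nat \<Rightarrow> nat \<Rightarrow> bool" where
  "all_right_except r j = (\<lambda>i. 1 \<le> i \<and> i \<le> r \<and> i \<noteq> j)"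

lemma descent_paths_zero_after:
  assumes u: "u \<in> descent_paths r w X" and "u j = 0" "j \<le> i"
  shows "u i = 0"
  using \<open>j \<le> i\<close>
proof (induction i rule: dec_induct)
  case (step i)
  then show ?case using u unfolding descent_paths_def by (cases "Suc i \<le> r") fastforce+
qed (fact \<open>u j = 0\<close>)

lemma descent_paths_exit_row:
  assumes "1 \<le> w" and u: "u \<in> descent_paths r w X"
  obtains j where "j \<in> {1..r}" "u \<in> decreasing_seqs (j - 1) w" "\<forall>i\<in>{1..r}. X i = (i \<noteq> j)"
proof -
  have u0: "u 0 = w" and "u r = 0" and mono: "\<And>i. 1 \<le> i \<Longrightarrow> i \<le> r \<Longrightarrow> u i \<le> u (i - 1)"
    and X: "\<And>i. 1 \<le> i \<Longrightarrow> i \<le> r \<Longrightarrow> X i = (\<not> (u i = 0 \<and> 0 < u (i - 1)))"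
    using u unfolding descent_paths_def by auto
  define j where "j = (LEAST i. u i = 0)"
  have "u j = 0" and "j \<le> r"
    unfolding j_def using \<open>u r = 0\<close> by (rule LeastI, rule Least_le)
  have pos: "0 < u i" if "i < j" for i
    using not_less_Least[of i "\<lambda>i. u i = 0"] that unfolding j_def by simp
  have zero: "u i = 0" if "j \<le> i" for i
    using descent_paths_zero_after[OF u \<open>u j = 0\<close> that] .
  have "1 \<le> j" using \<open>u j = 0\<close> u0 \<open>1 \<le> w\<close> by (cases j) auto
  show ?thesis
  proof
    show "j \<in> {1..r}" using \<open>1 \<le> j\<close> \<open>j \<le> r\<close> by simp
    show "u \<in> decreasing_seqs (j - 1) w"
      unfolding decreasing_seqs_def using u0 pos mono zero \<open>j \<le> r\<close> by (auto simp: Suc_le_eq)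
    show "\<forall>i\<in>{1..r}. X i = (i \<noteq> j)"
    proof
      fix i assume "i \<in> {1..r}"
      then have "X i = (\<not> (u i = 0 \<and> 0 < u (i - 1)))" using X by simp
      then show "X i = (i \<noteq> j)"
      proof (cases i j rule: linorder_cases)
        case equal
        then show ?thesis using \<open>X i = _\<close> \<open>u j = 0\<close> pos[of "j - 1"] \<open>1 \<le> j\<close> by simp
      next
        case greater
        then show ?thesis using \<open>X i = _\<close> zero[of "i - 1"] by simp
      qed (use \<open>X i = _\<close> pos[of i] in simp)
    qed
  qed
qed

lemma descent_paths_row_set:
  assumes "1 \<le> w" and "X \<in> row_sets r" and "u \<in> descent_paths r w X"
  shows "\<exists>j\<in>{1..r}. X = all_right_except r j"
proof -
  obtain j where "j \<in> {1..r}" "\<forall>i\<in>{1..r}. X i = (i \<noteq> j)"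
    using descent_paths_exit_row[OF assms(1,3)] by blast
  moreover have "X i = all_right_except r j i" for i
  proof (cases "i \<in> {1..r}")
    case True
    then show ?thesis using calculation unfolding all_right_except_def by simp
  next
    case False
    then show ?thesis using \<open>X \<in> row_sets r\<close> unfolding row_sets_def all_right_except_def by auto
  qed
  ultimately show ?thesis by blast
qed

lemma decreasing_seqs_subset_descent_paths:
  assumes "1 \<le> w" "1 \<le> j" "j \<le> r"
  shows "decreasing_seqs (j - 1) w \<subseteq> descent_paths r w (all_right_except r j)"
proof
  fix u assume u: "u \<in> decreasing_seqs (j - 1) w"
  have u0: "u 0 = w" and dec: "\<And>i. 1 \<le> i \<Longrightarrow> i \<le> j - 1 \<Longrightarrow> 1 \<le> u i \<and> u i \<le> u (i - 1)"
    and zero: "\<And>i. j - 1 < i \<Longrightarrow> u i = 0"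
    using u unfolding decreasing_seqs_def by auto
  have pos: "1 \<le> u i" if "i < j" for i
    using dec[of i] u0 \<open>1 \<le> w\<close> that by (cases "i = 0") auto
  have "u i \<le> u (i - 1) \<and> all_right_except r j i = (\<not> (u i = 0 \<and> 0 < u (i - 1)))"
    if "1 \<le> i" "i \<le> r" for i
  proof (cases i j rule: linorder_cases)
    case less
    then have "i \<le> j - 1" by simp
    then show ?thesis using dec[of i] that unfolding all_right_except_def by simp
  next
    case equal
    then show ?thesis using zero[of i] pos[of "i - 1"] that unfolding all_right_except_def by simp
  next
    case greater
    then show ?thesis
      using zero[of i] zero[of "i - 1"] that \<open>1 \<le> j\<close> unfolding all_right_except_def by simp
  qed
  then show "u \<in> descent_paths r w (all_right_except r j)"
    unfolding descent_paths_def using u0 decreasing_seqs_le[OF u] zero assms(2,3) by auto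
qed

lemma descent_paths_all_right_except:
  assumes "1 \<le> w" "1 \<le> j" "j \<le> r"
  shows "descent_paths r w (all_right_except r j) = decreasing_seqs (j - 1) w"
proof
  show "descent_paths r w (all_right_except r j) \<subseteq> decreasing_seqs (j - 1) w"
  proof
    fix u assume "u \<in> descent_paths r w (all_right_except r j)"
    then obtain j' where "j' \<in> {1..r}" "u \<in> decreasing_seqs (j' - 1) w"
      and "\<forall>i\<in>{1..r}. all_right_except r j i = (i \<noteq> j')"
      using descent_paths_exit_row[OF assms(1)] by blast
    moreover from this have "j' = j"
      using assms(2,3) unfolding all_right_except_def by auto
    ultimately show "u \<in> decreasing_seqs (j - 1) w" by simp
  qed
qed (rule decreasing_seqs_subset_descent_paths[OF assms])

lemma sum_row_sets_descent_paths:
  "(\<Sum>X\<in>row_sets r. card (descent_paths r (Suc m) X) * f X) =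
    (\<Sum>j = 1..r. ((m + j - 1) choose m) * f (all_right_except r j))"
proof -
  have "(\<Sum>X\<in>row_sets r. card (descent_paths r (Suc m) X) * f X) =
      (\<Sum>X\<in>all_right_except r ` {1..r}. card (descent_paths r (Suc m) X) * f X)"
  proof (rule sum.mono_neutral_right[OF finite_row_sets])
    show "all_right_except r ` {1..r} \<subseteq> row_sets r"
      unfolding all_right_except_def row_sets_def by auto
    have "descent_paths r (Suc m) X = {}" if "X \<in> row_sets r - all_right_except r ` {1..r}" for X
      using that descent_paths_row_set[of "Suc m" X r] by fastforce
    then show "\<forall>X\<in>row_sets r - all_right_except r ` {1..r}.
        card (descent_paths r (Suc m) X) * f X = 0" by simp
  qed
  also have "\<dots> = (\<Sum>j = 1..r.
      card (descent_paths r (Suc m) (all_right_except r j)) * f (all_right_except r j))"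
  proof (rule sum.reindex_cong[OF _ refl refl])
    show "inj_on (all_right_except r) {1..r}"
      by (rule inj_onI) (metis all_right_except_def atLeastAtMost_iff)
  qed
  also have "\<dots> = (\<Sum>j = 1..r. ((m + j - 1) choose m) * f (all_right_except r j))"
  proof (rule sum.cong[OF refl])
    fix j assume "j \<in> {1..r}"
    then have "card (descent_paths r (Suc m) (all_right_except r j)) = (m + (j - 1)) choose (j - 1)"
      by (simp add: descent_paths_all_right_except card_decreasing_seqs)
    also have "\<dots> = (m + j - 1) choose m"
      using \<open>j \<in> {1..r}\<close> binomial_symmetric[of "j - 1" "m + (j - 1)"] by simp
    finally show "card (descent_paths r (Suc m) (all_right_except r j)) * f (all_right_except r j) =
        ((m + j - 1) choose m) * f (all_right_except r j)" by simp
  qed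
  finally show ?thesis .
qed

lemma is_partition_antimono:
  assumes "is_partition n lam" "1 \<le> j" "j \<le> k" "k \<le> n"
  shows "lam k \<le> lam j"
  using \<open>j \<le> k\<close> \<open>k \<le> n\<close>
proof (induction k rule: dec_induct)
  case (step k)
  then have "lam (Suc k) \<le> lam k" using assms(1,2) unfolding is_partition_def by simp
  then show ?case using step.IH step.prems by simp
qed simp

lemma top_up_beyond_second_part:
  assumes "is_partition n lam" "2 \<le> n" "1 \<le> t" "t \<le> lam 1 - lam 2 + 1"
  shows "t + (n + lam 2 - 1) \<in> top_up n lam \<longleftrightarrow> t = lam 1 - lam 2 + 1"
proof -
  have "lam 2 \<le> lam 1" using is_partition_antimono[OF assms(1), of 1 2] assms(2) by simp
  show ?thesis
  proof
    assume "t + (n + lam 2 - 1) \<in> top_up n lam"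
    then obtain k where k: "1 \<le> k" "k \<le> n" "t + (n + lam 2 - 1) = lam k + n + 1 - k"
      unfolding top_up_def by blast
    show "t = lam 1 - lam 2 + 1"
    proof (cases "k = 1")
      case True
      then show ?thesis using k(3) assms(2) \<open>lam 2 \<le> lam 1\<close> by simp
    next
      case False
      then have "lam k \<le> lam 2" using is_partition_antimono[OF assms(1), of 2 k] k by simp
      then show ?thesis using False k assms(2,3) by simp
    qed
  next
    assume "t = lam 1 - lam 2 + 1"
    then have "t + (n + lam 2 - 1) = lam 1 + n + 1 - 1" using assms(2) \<open>lam 2 \<le> lam 1\<close> by simp
    then show "t + (n + lam 2 - 1) \<in> top_up n lam"
      unfolding top_up_def using assms(2) by force
  qed
qed

theorem lemma3:
  fixes n :: nat and lam :: "nat \<Rightarrow> nat"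
  assumes "n \<ge> 2" and "is_partition n lam"
  shows "A_count lam n =
    (\<Sum>j = 1..n. ((lam 1 - lam 2 + j - 1) choose (lam 1 - lam 2)) * R_count n lam j)"
proof -
  define m where "m = lam 1 - lam 2"
  define c where "c = n + lam 2 - 1"
  define T where "T i = (i \<in> top_up n lam)" for i
  have "lam 2 \<le> lam 1" using is_partition_antimono[OF assms(2), of 1 2] assms(1) by simp
  then have columns: "n + lam 1 = c + Suc m" using assms(1) by (simp add: m_def c_def)
  have left_top: "six_vertex_states n (Suc m) (\<lambda>_. True) X (\<lambda>j. T (j + c)) (\<lambda>_. False) =
      six_vertex_states n (Suc m) (\<lambda>_. True) X (\<lambda>j. j = Suc m) (\<lambda>_. False)" for X
    by (rule six_vertex_states_cong)
       (use top_up_beyond_second_part[OF assms(2,1)] in \<open>auto simp: T_def c_def m_def\<close>)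
  have right_boundary: "six_vertex_states n c (all_right_except n j) (\<lambda>_. False) T (\<lambda>_. False) =
      six_vertex_states n c (\<lambda>i. i \<noteq> j) (\<lambda>_. False) T (\<lambda>_. False)" for j
    by (rule six_vertex_states_cong) (auto simp: all_right_except_def)
  have "A_count lam n = card (six_vertex_states n (c + Suc m) (\<lambda>_. True) (\<lambda>_. False) T (\<lambda>_. False))"
    unfolding A_count_def columns T_def ..
  also have "\<dots> = (\<Sum>X\<in>row_sets n. card (descent_paths n (Suc m) X)
      * card (six_vertex_states n c X (\<lambda>_. False) T (\<lambda>_. False)))"
    by (simp only: card_six_vertex_states_cut left_top card_single_arrow_states)
  also have "\<dots> = (\<Sum>j = 1..n. ((m + j - 1) choose m) * R_count n lam j)"
    unfolding sum_row_sets_descent_paths right_boundary unfolding R_count_def c_def T_def ..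
  finally show ?thesis unfolding m_def .
qed

end
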